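(* Suppose the system is described by a distribution $\mathbf{p}\in[\vec{z}]_i$. A parallel configuration of gates specified by the partition $\mathcal{F},\mathcal{D},\mathcal{S},\mathcal{B}$ of the paths effects a transformation with the following properties. (1) If $i\in\mathcal{D}$, then $D_i$ 'Clicks' with certainty, all other detectors remain silent, and afterwards the system is described by a distribution $\mathbf{p}'\in[\mathbf{e}_i]_i$. (2) If $i\notin\mathcal{D}$, then no detector 'Clicks', and afterwards the system is described by a distribution $\mathbf{p}'$ characterised by the vector $\vec{z}\,'$ equal to the normalisation of $\prod_{j\in\mathcal{D}}(I-P_j)\prod_{k\in\mathcal{S}}S_k\prod_{\{s,t\}\in\mathcal{B}}B_{st}\,\vec{z}$, as follows: (a) if $i\notin\bigcup\mathcal{B}$ (path $i$ does not enter a beam splitter), then $\mathbf{p}'\in[\vec{z}\,']_i$; (b) if $i\in\{s,t\}\in\mathcal{B}$, then $\mathbf{p}'=\frac{|z_s'|^2}{|z_s'|^2+|z_t'|^2}\mathbf{p}_s'+\frac{|z_t'|^2}{|z_s'|^2+|z_t'|^2}\mathbf{p}_t'$ with $\mathbf{p}_s'\in[\vec{z}\,']_s$ and $\mathbf{p}_t'\in[\vec{z}\,']_t$ (whenever $|z_s'|^2+|z_t'|^2\neq0$).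
   Context: A local ontological model for a single particle in an $N$-path interferometric circuit. Ontic states are $(q,\vec{u},\vec{\tau})\in\Lambda$, with particle position $q\in\{1,\dots,N\}$, field amplitudes $\vec{u}\in\mathbb{C}^N$ ($|u_j|\le1$) and field strengths $\vec{\tau}\in\mathbb{R}^N$ ($0\le\tau_j\le1$); $\mathcal{P}(\Lambda)$ is the set of probability distributions on $\Lambda$. Gates (local; the particle changes path only at beam splitters): free evolution: $u_j\to u_j$, $\tau_j\to\tau_j/2$. Phase shifter $S_j$: $u_j\to e^{i\omega}u_j$, $\tau_j\to\tau_j/2$. Detector $D_j$: 'Clicks' iff $q=j$; if $q=j$ then $u_j\to1,\tau_j\to1$; otherwise $u_j$ unchanged, $\tau_j\to0$. Beam splitter $B_{st}$ ($R+T=1$): with $\tau^{(st)}=\max\{\tau_s,\tau_t\}$, $(u_s',u_t')^T=\begin{pmatrix}i\sqrt{R}&\sqrt{T}\\ \sqrt{T}&i\sqrt{R}\end{pmatrix}\mathrm{diag}(\delta_{\tau_s\tau^{(st)}},\delta_{\tau_t\tau^{(st)}})(u_s,u_t)^T$, $\tau_s,\tau_t\to\tau^{(st)}/2$, and if $q\in\{s,t\}$ the particle goes to $s$ with probability $|u_s'|^2/(|u_s'|^2+|u_t'|^2)$, else to $t$. A parallel configuration of gates is a partition of the paths $\{1,\dots,N\}$ into $\mathcal{F}$ (empty paths), $\mathcal{D}$ (detectors), $\mathcal{S}$ (phase shifters) and $\mathcal{B}$ (pairs $\{s,t\}$ crossing on beam splitters). $\Lambda^i_{\vec{z}}$ is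 the set of ontic states with $q=i$, $\tau_i=\tau:=\max_k\tau_k>0$, and $\Delta_\tau\vec{u}=\alpha\vec{z}$ for some nonzero $\alpha\in\mathbb{C}$, where $\Delta_\tau=\mathrm{diag}(\delta_{\tau_1\tau},\dots,\delta_{\tau_N\tau})$; $[\vec{z}]_i$ is the set of distributions with support in $\Lambda^i_{\vec{z}}$. Matrices: $P_j$ is the diagonal projector onto the $j$-th component; $S_k$ is diagonal with $e^{i\omega}$ in entry $k$ and 1 elsewhere; $B_{st}$ is the identity except for the block $\begin{pmatrix}i\sqrt{R}&\sqrt{T}\\ \sqrt{T}&i\sqrt{R}\end{pmatrix}$ on entries $\{s,t\}$. $\mathbf{e}_i$ is the $i$-th standard basis vector.
   Formalization: The set $\Lambda^i_{\vec{z}}$ omits the amplitude bound $|u_j|\le1$ of $\Lambda$, so distributions in $[\vec{z}]_i$, $[\mathbf{e}_i]_i$ and $[\vec{z}\,']_i$ may carry field amplitudes of modulus above 1. The statement above fails without it. *)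

theory Defs
  imports "HOL-Probability.Probability"
begin

text \<open>Paths are indexed by a finite type 'n (N = CARD('n)).
  An ontic state is (q, u, tau): particle position, field amplitudes, field strengths.\<close>

type_synonym 'n ontic = "'n \<times> (complex^'n) \<times> (real^'n)"

definition lam_M :: "('n::finite) ontic measure" where
  "lam_M = count_space UNIV \<Otimes>\<^sub>M (borel \<Otimes>\<^sub>M borel)"

definition tau_max :: "real^'n::finite \<Rightarrow> real" where
  "tau_max tau = Max (range (\<lambda>k. tau $ k))"

definition Delta_mat :: "real \<Rightarrow> real^'n \<Rightarrow> complex^'n^'n" where
  "Delta_mat t tau = (\<chi> a b. if a = b \<and> tau $ a = t then 1 else 0)"

definition Lam :: "'n::finite \<Rightarrow> complex^'n \<Rightarrow> 'n ontic set" where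
  "Lam i z = {(q, u, tau). q = i \<and> (\<forall>j. 0 \<le> tau $ j \<and> tau $ j \<le> 1) \<and>
      tau $ i = tau_max tau \<and> tau_max tau > 0 \<and>
      (\<exists>\<alpha>::complex. \<alpha> \<noteq> 0 \<and> Delta_mat (tau_max tau) tau *v u = \<alpha> *s z)}"

definition zdist :: "complex^'n \<Rightarrow> 'n::finite \<Rightarrow> 'n ontic measure set" where
  "zdist z i = {p. prob_space p \<and> sets p = sets lam_M \<and> (AE x in p. x \<in> Lam i z)}"

definition parallel_config :: "'n set \<Rightarrow> 'n set \<Rightarrow> 'n set \<Rightarrow> 'n set set \<Rightarrow> bool" where
  "parallel_config F D S B \<longleftrightarrow>
     F \<inter> D = {} \<and> F \<inter> S = {} \<and> D \<inter> S = {} \<and> (F \<union> D \<union> S) \<inter> \<Union>B = {} \<and>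
     F \<union> D \<union> S \<union> \<Union>B = UNIV \<and>
     (\<forall>b\<in>B. card b = 2) \<and> (\<forall>b\<in>B. \<forall>c\<in>B. b \<noteq> c \<longrightarrow> b \<inter> c = {})"

definition partner :: "'n set set \<Rightarrow> 'n \<Rightarrow> 'n" where
  "partner B j = (THE k. k \<noteq> j \<and> {j, k} \<in> B)"

definition bs_amp :: "real \<Rightarrow> real^'n \<Rightarrow> complex^'n \<Rightarrow> 'n \<Rightarrow> 'n \<Rightarrow> complex" where
  "bs_amp r tau u j k =
     (let m = max (tau $ j) (tau $ k);
          dj = (if tau $ j = m then 1 else 0);
          dk = (if tau $ k = m then 1 else 0)
      in \<i> * complex_of_real (sqrt r) * dj * u $ j + complex_of_real (sqrt (1 - r)) * dk * u $ k)"

text \<open>Field amplitude / strength update of the parallel configuration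
  (omega j: phase of the shifter on path j; R b: reflectivity of the beam splitter on pair b).\<close>
definition gate_u :: "'n set \<Rightarrow> 'n set \<Rightarrow> 'n set \<Rightarrow> 'n set set \<Rightarrow> ('n \<Rightarrow> real) \<Rightarrow> ('n set \<Rightarrow> real)
    \<Rightarrow> ('n::finite) ontic \<Rightarrow> complex^'n" where
  "gate_u F D S B \<omega> R x = (case x of (q, u, tau) \<Rightarrow>
     (\<chi> j. if j \<in> D then (if q = j then 1 else u $ j)
           else if j \<in> S then exp (\<i> * complex_of_real (\<omega> j)) * u $ j
           else if j \<in> \<Union>B then bs_amp (R {j, partner B j}) tau u j (partner B j)
           else u $ j))"

definition gate_tau :: "'n set \<Rightarrow> 'n set \<Rightarrow> 'n set \<Rightarrow> 'n set set
    \<Rightarrow> ('n::finite) ontic \<Rightarrow> real^'n" where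
  "gate_tau F D S B x = (case x of (q, u, tau) \<Rightarrow>
     (\<chi> j. if j \<in> D then (if q = j then 1 else 0)
           else if j \<in> \<Union>B then max (tau $ j) (tau $ (partner B j)) / 2
           else tau $ j / 2))"

text \<open>Particle motion: only at a beam splitter; from path q (partner k) it goes to q with
  probability |u_q'|^2/(|u_q'|^2+|u_k'|^2), else to k.  (Convention if the denominator
  vanishes: the particle stays.)\<close>
definition move_pmf :: "'n set \<Rightarrow> 'n set \<Rightarrow> 'n set \<Rightarrow> 'n set set \<Rightarrow> ('n \<Rightarrow> real) \<Rightarrow> ('n set \<Rightarrow> real)
    \<Rightarrow> ('n::finite) ontic \<Rightarrow> 'n pmf" where
  "move_pmf F D S B \<omega> R x = (case x of (q, u, tau) \<Rightarrow>
     (if q \<in> \<Union>B then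
        (let k = partner B q; u' = gate_u F D S B \<omega> R x;
             a = (cmod (u' $ q))\<^sup>2; b = (cmod (u' $ k))\<^sup>2
         in if a + b = 0 then return_pmf q
            else map_pmf (\<lambda>c. if c then q else k) (bernoulli_pmf (a / (a + b))))
      else return_pmf q))"

definition gate_kernel :: "'n set \<Rightarrow> 'n set \<Rightarrow> 'n set \<Rightarrow> 'n set set \<Rightarrow> ('n \<Rightarrow> real) \<Rightarrow> ('n set \<Rightarrow> real)
    \<Rightarrow> ('n::finite) ontic \<Rightarrow> 'n ontic measure" where
  "gate_kernel F D S B \<omega> R x =
     distr (measure_pmf (move_pmf F D S B \<omega> R x)) lam_M
       (\<lambda>q'. (q', gate_u F D S B \<omega> R x, gate_tau F D S B x))"

definition apply_config :: "'n set \<Rightarrow> 'n set \<Rightarrow> 'n set \<Rightarrow> 'n set set \<Rightarrow> ('n \<Rightarrow> real) \<Rightarrow> ('n set \<Rightarrow> real)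
    \<Rightarrow> ('n::finite) ontic measure \<Rightarrow> 'n ontic measure" where
  "apply_config F D S B \<omega> R p = Giry_Monad.bind p (gate_kernel F D S B \<omega> R)"

definition clicks :: "'n set \<Rightarrow> 'n ontic \<Rightarrow> 'n set" where
  "clicks D x = {j \<in> D. fst x = j}"

definition P_mat :: "'n \<Rightarrow> complex^'n^'n" where
  "P_mat j = (\<chi> a b. if a = b \<and> a = j then 1 else 0)"

definition S_mat :: "real \<Rightarrow> 'n \<Rightarrow> complex^'n^'n" where
  "S_mat w k = (\<chi> a b. if a = b then (if a = k then exp (\<i> * complex_of_real w) else 1) else 0)"

definition B_mat :: "real \<Rightarrow> 'n set \<Rightarrow> complex^'n^'n" where
  "B_mat r b = (\<chi> a c. if a \<in> b \<and> c \<in> b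
        then (if a = c then \<i> * complex_of_real (sqrt r) else complex_of_real (sqrt (1 - r)))
        else (if a = c then 1 else 0))"

text \<open>Product of a (commuting) family of matrices over a finite index set.\<close>
definition mprod :: "('x \<Rightarrow> complex^'n^'n) \<Rightarrow> 'x set \<Rightarrow> complex^'n^'n" where
  "mprod f X = Finite_Set.fold (\<lambda>x A. f x ** A) (mat 1) X"

definition normalise :: "complex^'n \<Rightarrow> complex^'n" where
  "normalise w = (1 / norm w) *\<^sub>R w"

end

theory Submission
  imports Defs
begin

text \<open>Write M for the matrix of the configuration and let the particle be on path i of an ontic
  state in \<Lambda>^i_z whose strongest fields, of strength m, carry the amplitudes \<alpha> z.  Every gate
  except a clicking detector halves the field strengths, and on the strongest fields it acts on the
  amplitudes exactly as its matrix does: the Kronecker deltas inside the beam splitter only discard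
  weaker fields, whose entries of z vanish.  Hence afterwards the fields of strength m/2 are precisely
  those carrying the amplitudes \<alpha> (M z), and path i (and its partner, if i enters a beam
  splitter) is among them, so the successor state lies in \<Lambda>^q'_z' for every path q' the
  particle can take.  At a beam splitter the particle branches with probabilities proportional to
  the squared moduli of the new amplitudes, i.e. to those of z', and integrating this two-point
  kernel against p yields the mixture.  A clicking detector on path i resets the fields to e_i.\<close>

definition block_on :: "'n set \<Rightarrow> 'a::zero_neq_one^'n^'n \<Rightarrow> bool" where
  "block_on C M \<longleftrightarrow> (\<forall>a c. a \<notin> C \<or> c \<notin> C \<longrightarrow> M $ a $ c = (if a = c then 1 else 0))"

lemma block_on_mult_vec:
  fixes M :: "'a::comm_ring_1^'n::finite^'n"
  assumes "block_on C M"
  shows "(M *v v) $ a = (if a \<in> C then \<Sum>c\<in>C. M $ a $ c * v $ c else v $ a)"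
proof -
  have "(M *v v) $ a = (\<Sum>c\<in>UNIV. M $ a $ c * v $ c)"
    by (simp add: matrix_vector_mult_def)
  also have "\<dots> = (if a \<in> C then \<Sum>c\<in>C. M $ a $ c * v $ c else v $ a)"
    using assms unfolding block_on_def
    by (auto simp: if_distrib[of "\<lambda>x. x * _"] sum.If_cases Int_def cong: if_cong
             intro!: sum.mono_neutral_right)
  finally show ?thesis .
qed

lemma block_on_mult_vec_cong:
  fixes M :: "'a::comm_ring_1^'n::finite^'n"
  assumes "block_on C M" "\<And>c. c \<in> C \<Longrightarrow> v $ c = w $ c" "a \<in> C"
  shows "(M *v v) $ a = (M *v w) $ a"
  using assms by (simp add: block_on_mult_vec)

lemma block_on_disjoint_commute:
  fixes M N :: "'a::comm_ring_1^'n::finite^'n"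
  assumes M: "block_on C M" and N: "block_on C' N" and disj: "C \<inter> C' = {}"
  shows "M ** N = N ** M"
proof -
  have "(M *v (N *v v)) $ a = (N *v (M *v v)) $ a" for v a
  proof -
    consider "a \<in> C" | "a \<in> C'" | "a \<notin> C" "a \<notin> C'" by blast
    then show ?thesis
    proof cases
      case 1
      have "(N *v v) $ c = v $ c" if "c \<in> C" for c
        using that disj by (auto simp: block_on_mult_vec[OF N])
      then have "(M *v (N *v v)) $ a = (M *v v) $ a"
        using block_on_mult_vec_cong[OF M _ 1] by blast
      moreover have "(N *v (M *v v)) $ a = (M *v v) $ a"
        using 1 disj by (auto simp: block_on_mult_vec[OF N])
      ultimately show ?thesis by simp
    next
      case 2
      have "(M *v v) $ c = v $ c" if "c \<in> C'" for c
        using that disj by (auto simp: block_on_mult_vec[OF M])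
      then have "(N *v (M *v v)) $ a = (N *v v) $ a"
        using block_on_mult_vec_cong[OF N _ 2] by blast
      moreover have "(M *v (N *v v)) $ a = (N *v v) $ a"
        using 2 disj by (auto simp: block_on_mult_vec[OF M])
      ultimately show ?thesis by simp
    qed (simp add: block_on_mult_vec[OF M] block_on_mult_vec[OF N])
  qed
  then show ?thesis by (simp add: matrix_eq matrix_vector_mul_assoc[symmetric] vec_eq_iff)
qed

lemma mprod_empty: "mprod f {} = mat 1"
  by (simp add: mprod_def)

lemma mprod_insert:
  assumes "finite X" "x \<notin> X"
    and "\<And>y y'. y \<in> insert x X \<Longrightarrow> y' \<in> insert x X \<Longrightarrow> f y ** f y' = f y' ** f y"
  shows "mprod f (insert x X) = f x ** mprod f X"
proof -
  interpret comp_fun_commute_on "insert x X" "\<lambda>y A. f y ** A"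
    by unfold_locales (use assms(3) in \<open>auto simp: fun_eq_iff matrix_mul_assoc\<close>)
  show ?thesis unfolding mprod_def using assms(1,2) by (simp add: fold_insert)
qed

lemma mprod_block_on_mult_vec:
  fixes f :: "'x \<Rightarrow> complex^'n::finite^'n"
  assumes "finite X" and "\<And>x. x \<in> X \<Longrightarrow> block_on (C x) (f x)"
    and "\<And>x y. x \<in> X \<Longrightarrow> y \<in> X \<Longrightarrow> x \<noteq> y \<Longrightarrow> C x \<inter> C y = {}"
  shows "(\<forall>x\<in>X. \<forall>a\<in>C x. (mprod f X *v v) $ a = (f x *v v) $ a)
       \<and> (\<forall>a. a \<notin> (\<Union>x\<in>X. C x) \<longrightarrow> (mprod f X *v v) $ a = v $ a)"
  using assms
proof (induction X rule: finite_induct)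
  case empty
  show ?case by (simp add: mprod_empty)
next
  case (insert x X)
  have block: "block_on (C y) (f y)" if "y \<in> insert x X" for y
    using insert.prems(1) that .
  have disj: "C y \<inter> C y' = {}" if "y \<in> insert x X" "y' \<in> insert x X" "y \<noteq> y'" for y y'
    using insert.prems(2) that .
  have comm: "f y ** f y' = f y' ** f y" if "y \<in> insert x X" "y' \<in> insert x X" for y y'
    using block_on_disjoint_commute[OF block block disj] that by (cases "y = y'") auto
  let ?w = "mprod f X *v v"
  have IH: "(\<forall>y\<in>X. \<forall>a\<in>C y. ?w $ a = (f y *v v) $ a) \<and> (\<forall>a. a \<notin> (\<Union>y\<in>X. C y) \<longrightarrow> ?w $ a = v $ a)"
    using insert.IH block disj by blast
  have "mprod f (insert x X) = f x ** mprod f X"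
    by (rule mprod_insert[OF insert.hyps]) (use comm in blast)
  then have prod: "mprod f (insert x X) *v v = f x *v ?w"
    by (simp add: matrix_vector_mul_assoc[symmetric])
  have outside_x: "(f x *v ?w) $ a = ?w $ a" if "a \<notin> C x" for a
    using that by (simp add: block_on_mult_vec[OF block])
  have "(f x *v ?w) $ a = (f x *v v) $ a" if "a \<in> C x" for a
  proof (rule block_on_mult_vec_cong[OF block _ that])
    fix c assume "c \<in> C x"
    then have "c \<notin> (\<Union>y\<in>X. C y)" using disj insert.hyps(2) by blast
    then show "?w $ c = v $ c" using IH by blast
  qed simp
  moreover have "a \<notin> C x" if "y \<in> X" "a \<in> C y" for y a
    using disj[of x y] that insert.hyps(2) by blast
  ultimately show ?case using IH outside_x by (auto simp: prod)
qed

lemma block_on_I_minus_P: "block_on {j} (mat 1 - P_mat j)"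
  by (simp add: block_on_def P_mat_def mat_def)

lemma block_on_S_mat: "block_on {k} (S_mat w k)"
  by (simp add: block_on_def S_mat_def)

lemma block_on_B_mat: "block_on b (B_mat r b)"
  by (auto simp: block_on_def B_mat_def)

lemma mprod_I_minus_P_mult_vec:
  "(mprod (\<lambda>j. mat 1 - P_mat j) (X :: 'n::finite set) *v v) $ a = (if a \<in> X then 0 else v $ a)"
proof -
  have "(mprod (\<lambda>j. mat 1 - P_mat j) X *v v) $ a = ((mat 1 - P_mat a) *v v) $ a" if "a \<in> X"
    using mprod_block_on_mult_vec[of X "\<lambda>j. {j}", OF _ block_on_I_minus_P] that by auto
  moreover have "((mat 1 - P_mat a) *v v) $ a = 0"
    by (subst block_on_mult_vec[OF block_on_I_minus_P]) (simp add: P_mat_def mat_def)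
  ultimately show ?thesis
    using mprod_block_on_mult_vec[of X "\<lambda>j. {j}", OF _ block_on_I_minus_P] by auto
qed

lemma mprod_S_mat_mult_vec:
  "(mprod (\<lambda>k. S_mat (\<omega> k) k) (X :: 'n::finite set) *v v) $ a =
     (if a \<in> X then exp (\<i> * complex_of_real (\<omega> a)) * v $ a else v $ a)"
proof -
  have "(mprod (\<lambda>k. S_mat (\<omega> k) k) X *v v) $ a = (S_mat (\<omega> a) a *v v) $ a" if "a \<in> X"
    using mprod_block_on_mult_vec[of X "\<lambda>k. {k}", OF _ block_on_S_mat] that by auto
  moreover have "(S_mat w a *v v) $ a = exp (\<i> * complex_of_real w) * v $ a" for w
    by (subst block_on_mult_vec[OF block_on_S_mat]) (simp add: S_mat_def)
  ultimately show ?thesis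
    using mprod_block_on_mult_vec[of X "\<lambda>k. {k}", OF _ block_on_S_mat] by auto
qed

lemma B_mat_mult_vec_pair:
  assumes "a \<noteq> k"
  shows "(B_mat r {a, k} *v v) $ a = \<i> * complex_of_real (sqrt r) * v $ a + complex_of_real (sqrt (1 - r)) * v $ k"
  using assms by (subst block_on_mult_vec[OF block_on_B_mat]) (simp add: B_mat_def)

lemma parallel_configD:
  assumes "parallel_config F D S B"
  shows "D \<inter> S = {}" "(D \<union> S) \<inter> \<Union>B = {}" "\<And>b. b \<in> B \<Longrightarrow> card b = 2"
    "\<And>b c. b \<in> B \<Longrightarrow> c \<in> B \<Longrightarrow> b \<noteq> c \<Longrightarrow> b \<inter> c = {}"
  using assms unfolding parallel_config_def by auto

lemma partner_pair:
  assumes cfg: "parallel_config F D S B" and b: "b \<in> B" and j: "j \<in> b"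
  shows "partner B j \<noteq> j" "b = {j, partner B j}"
proof -
  obtain x y where "b = {x, y}" "x \<noteq> y"
    using parallel_configD(3)[OF cfg b] by (meson card_2_iff)
  then obtain k where k: "b = {j, k}" "k \<noteq> j"
    using j by (metis insert_commute insertE singletonD)
  have "partner B j = k" unfolding partner_def
  proof (rule the_equality)
    fix k' assume k': "k' \<noteq> j \<and> {j, k'} \<in> B"
    then have "{j, k'} = b"
      using parallel_configD(4)[OF cfg _ b, of "{j, k'}"] j by blast
    then show "k' = k" using k k' by (auto simp: doubleton_eq_iff)
  qed (use k b in auto)
  then show "partner B j \<noteq> j" "b = {j, partner B j}" using k by auto
qed

lemma partner_partner:
  assumes "parallel_config F D S B" "j \<in> \<Union>B"
  shows "partner B (partner B j) = j" "partner B j \<in> \<Union>B"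
proof -
  obtain b where b: "b \<in> B" "j \<in> b" using assms(2) by blast
  note jk = partner_pair[OF assms(1) b]
  then have k: "partner B j \<in> b" by blast
  note kj = partner_pair[OF assms(1) b(1) k]
  from jk kj show "partner B (partner B j) = j"
    by (metis doubleton_eq_iff)
  from k b show "partner B j \<in> \<Union>B" by blast
qed

definition config_matrix :: "'n set \<Rightarrow> 'n set \<Rightarrow> 'n set set \<Rightarrow> ('n \<Rightarrow> real) \<Rightarrow> ('n set \<Rightarrow> real)
    \<Rightarrow> complex^'n^'n" where
  "config_matrix D S B \<omega> R = mprod (\<lambda>j. mat 1 - P_mat j) D ** mprod (\<lambda>k. S_mat (\<omega> k) k) S
     ** mprod (\<lambda>b. B_mat (R b) b) B"

lemma config_matrix_mult_vec:
  fixes z :: "complex^'n::finite"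
  assumes cfg: "parallel_config F D S B"
  shows "(config_matrix D S B \<omega> R *v z) $ a =
    (if a \<in> D then 0 else if a \<in> S then exp (\<i> * complex_of_real (\<omega> a)) * z $ a
     else if a \<in> \<Union>B then \<i> * complex_of_real (sqrt (R {a, partner B a})) * z $ a
         + complex_of_real (sqrt (1 - R {a, partner B a})) * z $ partner B a
     else z $ a)"
proof -
  let ?MB = "mprod (\<lambda>b. B_mat (R b) b) B"
  have MB: "(?MB *v z) $ a = (if a \<in> \<Union>B then \<i> * complex_of_real (sqrt (R {a, partner B a})) * z $ a
         + complex_of_real (sqrt (1 - R {a, partner B a})) * z $ partner B a else z $ a)"
  proof -
    note mprod_B = mprod_block_on_mult_vec[of B "\<lambda>b. b" "\<lambda>b. B_mat (R b) b", OF _ block_on_B_mat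
        parallel_configD(4)[OF cfg], simplified]
    show ?thesis
    proof (cases "a \<in> \<Union>B")
      case True
      then obtain b where b: "b \<in> B" "a \<in> b" by blast
      then have "(?MB *v z) $ a = (B_mat (R b) b *v z) $ a" using mprod_B by blast
      then show ?thesis
        using True partner_pair[OF cfg b] by (simp add: B_mat_mult_vec_pair)
    qed (use mprod_B in auto)
  qed
  show ?thesis
    using parallel_configD(1,2)[OF cfg] MB
    by (auto simp: config_matrix_def matrix_vector_mul_assoc[symmetric]
          mprod_I_minus_P_mult_vec mprod_S_mat_mult_vec)
qed

lemma Delta_mat_mult_vec: "(Delta_mat t tau *v u) $ a = (if tau $ a = t then u $ a else 0)"
  unfolding matrix_vector_mult_def Delta_mat_def
  by (simp add: if_distrib[of "\<lambda>x. x * _"] sum.delta cong: if_cong)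

lemma Delta_mat_eq_scaled_iff:
  "Delta_mat t tau *v u = \<alpha> *s z \<longleftrightarrow> (\<forall>a. (if tau $ a = t then u $ a else 0) = \<alpha> * z $ a)"
  by (simp add: vec_eq_iff Delta_mat_mult_vec)

lemma bs_amp_scaled:
  assumes "\<alpha> \<noteq> 0" "tau $ j \<le> m" "tau $ k \<le> m"
    and "(if tau $ j = m then u $ j else 0) = \<alpha> * z $ j"
    and "(if tau $ k = m then u $ k else 0) = \<alpha> * z $ k"
  shows "(if max (tau $ j) (tau $ k) = m then bs_amp r tau u j k else 0)
       = \<alpha> * (\<i> * complex_of_real (sqrt r) * z $ j + complex_of_real (sqrt (1 - r)) * z $ k)"
  using assms unfolding bs_amp_def Let_def max_def
  by (auto simp: algebra_simps split: if_splits)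

lemma gate_Delta_mat:
  fixes z :: "complex^'n::finite"
  assumes cfg: "parallel_config F D S B" and q: "q \<notin> D" and m: "0 < m" and \<alpha>: "\<alpha> \<noteq> 0"
    and tau: "\<And>l. 0 \<le> tau $ l \<and> tau $ l \<le> m" and u: "Delta_mat m tau *v u = \<alpha> *s z"
  shows "0 \<le> gate_tau F D S B (q, u, tau) $ j \<and> gate_tau F D S B (q, u, tau) $ j \<le> m / 2"
    and "Delta_mat (m / 2) (gate_tau F D S B (q, u, tau)) *v gate_u F D S B \<omega> R (q, u, tau)
         = \<alpha> *s (config_matrix D S B \<omega> R *v z)"
proof -
  have u_top: "(if tau $ l = m then u $ l else 0) = \<alpha> * z $ l" for l
    using u by (simp add: Delta_mat_eq_scaled_iff)
  have z0: "z $ l = 0" if "tau $ l \<noteq> m" for l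
    using u_top[of l] that \<alpha> by simp
  note disj = parallel_configD(1,2)[OF cfg]
  show "0 \<le> gate_tau F D S B (q, u, tau) $ j \<and> gate_tau F D S B (q, u, tau) $ j \<le> m / 2"
    using tau[of j] tau[of "partner B j"] q m by (auto simp: gate_tau_def)
  have "(if gate_tau F D S B (q, u, tau) $ j = m / 2 then gate_u F D S B \<omega> R (q, u, tau) $ j else 0)
        = \<alpha> * (config_matrix D S B \<omega> R *v z) $ j" for j
  proof -
    consider "j \<in> D" | "j \<in> S" | "j \<in> \<Union>B" | "j \<notin> D" "j \<notin> S" "j \<notin> \<Union>B" by blast
    then show ?thesis
    proof cases
      case 1
      then show ?thesis using q m by (auto simp: gate_tau_def config_matrix_mult_vec[OF cfg])
    next
      case 2
      then show ?thesis using disj u_top[of j] z0[of j]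
        by (auto simp: gate_tau_def gate_u_def config_matrix_mult_vec[OF cfg])
    next
      case 3
      then have "j \<notin> D" "j \<notin> S" using disj by auto
      with 3 show ?thesis
        using bs_amp_scaled[OF \<alpha> conjunct2[OF tau] conjunct2[OF tau] u_top u_top,
            of j "partner B j" "R {j, partner B j}"]
        by (auto simp: gate_tau_def gate_u_def config_matrix_mult_vec[OF cfg])
    next
      case 4
      then show ?thesis using u_top[of j] z0[of j]
        by (auto simp: gate_tau_def gate_u_def config_matrix_mult_vec[OF cfg])
    qed
  qed
  then show "Delta_mat (m / 2) (gate_tau F D S B (q, u, tau)) *v gate_u F D S B \<omega> R (q, u, tau)
         = \<alpha> *s (config_matrix D S B \<omega> R *v z)"
    by (simp add: Delta_mat_eq_scaled_iff)
qed

lemma gate_tau_at_particle: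
  assumes cfg: "parallel_config F D S B" and q: "q \<notin> D" and m: "tau $ q = m"
    and le: "\<And>l. tau $ l \<le> m"
  shows "gate_tau F D S B (q, u, tau) $ q = m / 2"
    and "q \<in> \<Union>B \<Longrightarrow> gate_tau F D S B (q, u, tau) $ partner B q = m / 2"
proof -
  show "gate_tau F D S B (q, u, tau) $ q = m / 2"
    using q m le[of "partner B q"] by (simp add: gate_tau_def max_def)
  assume qB: "q \<in> \<Union>B"
  then have "partner B q \<notin> D"
    using partner_partner(2)[OF cfg qB] parallel_configD(2)[OF cfg] by blast
  then show "gate_tau F D S B (q, u, tau) $ partner B q = m / 2"
    using m le[of "partner B q"] partner_partner[OF cfg qB] by (simp add: gate_tau_def max_def)
qed

lemma tau_max_ge: "tau $ j \<le> tau_max (tau :: real^'n::finite)"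
  unfolding tau_max_def by (rule Max_ge) auto

lemma tau_max_eqI: "(\<And>j. tau $ j \<le> c) \<Longrightarrow> tau $ j0 = c \<Longrightarrow> tau_max (tau :: real^'n::finite) = c"
  unfolding tau_max_def by (rule Max_eqI) auto

lemma scaled_normalise:
  fixes w :: "complex^'n::finite"
  assumes "\<alpha> \<noteq> 0"
  obtains \<beta> :: complex where "\<beta> \<noteq> 0" "\<alpha> *s w = \<beta> *s normalise w"
proof (cases "w = 0")
  case True
  then show ?thesis by (intro that[of 1]) (simp_all add: normalise_def vec_eq_iff)
next
  case False
  show ?thesis
  proof (rule that)
    show "\<alpha> * complex_of_real (norm w) \<noteq> 0" using assms False by simp
    show "\<alpha> *s w = (\<alpha> * complex_of_real (norm w)) *s normalise w"
      using False by (simp add: vec_eq_iff normalise_def scaleR_conv_of_real[where 'a=complex])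
  qed
qed

lemma gate_state_in_Lam:
  fixes z :: "complex^'n::finite"
  assumes cfg: "parallel_config F D S B" and x: "(q, u, tau) \<in> Lam q z" and q: "q \<notin> D"
    and q': "gate_tau F D S B (q, u, tau) $ q' = tau_max tau / 2"
  shows "(q', gate_u F D S B \<omega> R (q, u, tau), gate_tau F D S B (q, u, tau))
           \<in> Lam q' (normalise (config_matrix D S B \<omega> R *v z))"
proof -
  let ?t = "gate_tau F D S B (q, u, tau)" and ?u = "gate_u F D S B \<omega> R (q, u, tau)"
    and ?w = "config_matrix D S B \<omega> R *v z"
  obtain \<alpha> where \<alpha>: "\<alpha> \<noteq> 0" "Delta_mat (tau_max tau) tau *v u = \<alpha> *s z"
    and m: "0 < tau_max tau" "tau $ q = tau_max tau" and tau: "\<And>l. 0 \<le> tau $ l \<and> tau $ l \<le> 1"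
    using x unfolding Lam_def by blast
  have tau_le: "0 \<le> tau $ l \<and> tau $ l \<le> tau_max tau" for l
    using tau tau_max_ge by blast
  note post = gate_Delta_mat[OF cfg q m(1) \<alpha>(1) tau_le \<alpha>(2)]
  have tm: "tau_max ?t = tau_max tau / 2"
    by (rule tau_max_eqI[OF conjunct2[OF post(1)] q'])
  have bounds: "0 \<le> ?t $ l \<and> ?t $ l \<le> 1" for l
    using post(1)[of l] tau[of q] m(2) by linarith
  obtain \<beta> where \<beta>: "\<beta> \<noteq> 0" "\<alpha> *s ?w = \<beta> *s normalise ?w"
    using scaled_normalise[OF \<alpha>(1)] .
  have "Delta_mat (tau_max ?t) ?t *v ?u = \<beta> *s normalise ?w"
    using post(2) \<beta>(2) unfolding tm by simp
  moreover have "tau_max ?t > 0" "?t $ q' = tau_max ?t" using tm q' m(1) by simp_all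
  ultimately show ?thesis unfolding Lam_def using \<beta>(1) bounds by blast
qed

lemma gate_state_in_Lam_detector:
  assumes x: "(q, u, tau) \<in> Lam q z" and q: "q \<in> D"
  shows "(q, gate_u F D S B \<omega> R (q, u, tau), gate_tau F D S B (q, u, tau)) \<in> Lam q (axis q 1)"
proof -
  let ?t = "gate_tau F D S B (q, u, tau)" and ?u = "gate_u F D S B \<omega> R (q, u, tau)"
  have tau: "0 \<le> tau $ l \<and> tau $ l \<le> 1" for l
    using x unfolding Lam_def by blast
  have t: "0 \<le> ?t $ l \<and> (l \<noteq> q \<longrightarrow> ?t $ l \<le> 1 / 2)" for l
    using tau[of l] tau[of "partner B l"] by (auto simp: gate_tau_def)
  have tq: "?t $ q = 1" using q by (simp add: gate_tau_def)
  have bounds: "0 \<le> ?t $ l \<and> ?t $ l \<le> 1" for l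
    using t[of l] tq by (cases "l = q") auto
  have tm: "tau_max ?t = 1"
    by (rule tau_max_eqI[of _ _ q]) (use bounds tq in auto)
  have "(if ?t $ l = 1 then ?u $ l else 0) = 1 * axis q 1 $ l" for l
    using t[of l] tq q by (auto simp: gate_u_def axis_def)
  then have "Delta_mat (tau_max ?t) ?t *v ?u = 1 *s axis q 1"
    unfolding tm Delta_mat_eq_scaled_iff by blast
  moreover have "tau_max ?t > 0" "?t $ q = tau_max ?t" using tm tq by simp_all
  ultimately show ?thesis unfolding Lam_def using bounds one_neq_zero by blast
qed

lemma LamE:
  assumes "x \<in> Lam i z"
  obtains u tau where "x = (i, u, tau)" "(i, u, tau) \<in> Lam i z"
  using assms unfolding Lam_def by auto

lemma gate_state_in_Lam_branch:
  assumes cfg: "parallel_config F D S B" and x: "x \<in> Lam i z" and i: "i \<notin> D"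
    and q': "q' = i \<or> i \<in> \<Union>B \<and> q' = partner B i"
  shows "(q', gate_u F D S B \<omega> R x, gate_tau F D S B x) \<in> Lam q' (normalise (config_matrix D S B \<omega> R *v z))"
proof -
  obtain u tau where x_eq: "x = (i, u, tau)" and xL: "(i, u, tau) \<in> Lam i z"
    using x by (rule LamE)
  then have "tau $ i = tau_max tau" unfolding Lam_def by blast
  then have "gate_tau F D S B (i, u, tau) $ q' = tau_max tau / 2"
    using gate_tau_at_particle[OF cfg i _ tau_max_ge] q' by blast
  then show ?thesis using gate_state_in_Lam[OF cfg xL i] x_eq by simp
qed

lemma vec_borel_measurableI:
  fixes f :: "'a \<Rightarrow> 'b::euclidean_space ^ 'n::finite"
  assumes "\<And>j. (\<lambda>x. f x $ j) \<in> borel_measurable M"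
  shows "f \<in> borel_measurable M"
proof (rule borel_measurable_euclidean_space[THEN iffD2], intro ballI)
  fix b :: "'b^'n" assume "b \<in> Basis"
  then obtain j u where b: "b = axis j u" "u \<in> Basis" unfolding Basis_vec_def by auto
  have "(\<lambda>x. inner (f x $ j) u) \<in> borel_measurable M" using assms[of j] by measurable
  then show "(\<lambda>x. f x \<bullet> b) \<in> borel_measurable M" by (simp add: b inner_axis)
qed

lemma vec_nth_borel_measurable[measurable]:
  "(\<lambda>x::'b::euclidean_space^'n::finite. x $ j) \<in> borel_measurable borel"
proof (rule borel_measurable_euclidean_space[THEN iffD2], intro ballI)
  fix u :: 'b assume "u \<in> Basis"
  have "(\<lambda>x::'b^'n. inner x (axis j u)) \<in> borel_measurable borel" by measurable
  then show "(\<lambda>x::'b^'n. x $ j \<bullet> u) \<in> borel_measurable borel" by (simp add: inner_axis)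
qed

lemma space_lam_M[simp]: "space lam_M = UNIV"
  by (simp add: lam_M_def space_pair_measure)

lemma gate_u_measurable[measurable]:
  "gate_u F D S B \<omega> R \<in> borel_measurable (count_space UNIV \<Otimes>\<^sub>M (borel \<Otimes>\<^sub>M borel))"
  unfolding gate_u_def bs_amp_def Let_def
  by (rule vec_borel_measurableI) (simp add: case_prod_beta, measurable)

lemma gate_tau_measurable[measurable]:
  "gate_tau F D S B \<in> borel_measurable (count_space UNIV \<Otimes>\<^sub>M (borel \<Otimes>\<^sub>M borel))"
  unfolding gate_tau_def
  by (rule vec_borel_measurableI) (simp add: case_prod_beta, measurable)

lemma gate_state_measurable[measurable]:
  "(\<lambda>x. (q', gate_u F D S B \<omega> R x, gate_tau F D S B x)) \<in> measurable lam_M lam_M"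
  unfolding lam_M_def by measurable

lemma tau_max_measurable[measurable]: "(\<lambda>tau::real^'n::finite. tau_max tau) \<in> borel_measurable borel"
  unfolding tau_max_def by measurable

lemma nonzero_multiples_borel:
  "{w. \<exists>\<alpha>::complex. \<alpha> \<noteq> 0 \<and> w = \<alpha> *s z} \<in> sets (borel :: (complex^'n::finite) measure)"
proof (cases "z = 0")
  case True
  then have "{w. \<exists>\<alpha>::complex. \<alpha> \<noteq> 0 \<and> w = \<alpha> *s z} = {0}"
    using one_neq_zero by (auto simp: vec_eq_iff)
  then show ?thesis by simp
next
  case False
  let ?V = "range (\<lambda>\<alpha>::complex. \<alpha> *s z)"
  have "subspace ?V" unfolding subspace_def
  proof (intro conjI ballI allI)
    show "0 \<in> ?V" by (rule image_eqI[of _ _ 0]) (auto simp: vec_eq_iff)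
  next
    fix x y assume "x \<in> ?V" "y \<in> ?V"
    then obtain a b where "x = a *s z" "y = b *s z" by auto
    then show "x + y \<in> ?V"
      by (intro image_eqI[of _ _ "a + b"]) (auto simp: vec_eq_iff algebra_simps)
  next
    fix c :: real and x assume "x \<in> ?V"
    then obtain a where "x = a *s z" by auto
    then show "c *\<^sub>R x \<in> ?V"
      by (intro image_eqI[of _ _ "complex_of_real c * a"])
        (auto simp: vec_eq_iff scaleR_conv_of_real[where 'a=complex])
  qed
  then have "closed ?V" by (rule closed_subspace)
  moreover have "\<alpha> *s z \<noteq> 0" if "\<alpha> \<noteq> 0" for \<alpha> :: complex
    using False that by (auto simp: vec_eq_iff)
  then have "{w. \<exists>\<alpha>::complex. \<alpha> \<noteq> 0 \<and> w = \<alpha> *s z} = ?V - {0}"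
    by (auto intro: image_eqI[of _ _ 0])
  ultimately show ?thesis by auto
qed

lemma Lam_measurable[measurable]: "Lam i (z::complex^'n::finite) \<in> sets lam_M"
proof -
  have [measurable]: "{w. \<exists>\<alpha>::complex. \<alpha> \<noteq> 0 \<and> w = \<alpha> *s z} \<in> sets borel"
    by (rule nonzero_multiples_borel)
  have [measurable]: "(\<lambda>(u::complex^'n, tau::real^'n). Delta_mat (tau_max tau) tau *v u)
      \<in> borel_measurable (borel \<Otimes>\<^sub>M borel)"
    by (rule vec_borel_measurableI) (simp add: Delta_mat_mult_vec case_prod_beta, measurable)
  have "Lam i z = {x \<in> space (count_space UNIV \<Otimes>\<^sub>M (borel \<Otimes>\<^sub>M borel)). fst x = i \<and>
      (\<forall>j. 0 \<le> snd (snd x) $ j \<and> snd (snd x) $ j \<le> 1) \<and>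
      snd (snd x) $ i = tau_max (snd (snd x)) \<and> tau_max (snd (snd x)) > 0 \<and>
      (\<lambda>(u, tau). Delta_mat (tau_max tau) tau *v u) (snd x) \<in> {w. \<exists>\<alpha>::complex. \<alpha> \<noteq> 0 \<and> w = \<alpha> *s z}}"
    unfolding Lam_def by (auto simp: space_pair_measure)
  also have "\<dots> \<in> sets (count_space UNIV \<Otimes>\<^sub>M (borel \<Otimes>\<^sub>M borel))"
    by measurable
  finally show ?thesis unfolding lam_M_def .
qed

lemma pmf_map_bernoulli_if:
  assumes "0 \<le> w" "w \<le> 1"
  shows "pmf (map_pmf (\<lambda>c. if c then a else b) (bernoulli_pmf w)) x =
     (if x = a then w else 0) + (if x = b then 1 - w else 0)"
proof -
  have "(\<lambda>c. if c then a else b) -` {x} =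
      (if x = a then {True} else {}) \<union> (if x = b then {False} else {})"
    by (auto split: if_splits)
  then show ?thesis
    using assms by (auto simp: pmf_map measure_measure_pmf_finite sum.union_disjoint)
qed

definition branch_prob :: "complex^'n \<Rightarrow> 'n \<Rightarrow> 'n \<Rightarrow> real" where
  "branch_prob v s t = (cmod (v $ s))\<^sup>2 / ((cmod (v $ s))\<^sup>2 + (cmod (v $ t))\<^sup>2)"

lemma branch_prob_scaled:
  assumes "c \<noteq> 0" "v $ s = c * w $ s" "v $ t = c * w $ t"
  shows "branch_prob v s t = branch_prob w s t"
    and "(cmod (v $ s))\<^sup>2 + (cmod (v $ t))\<^sup>2 = (cmod c)\<^sup>2 * ((cmod (w $ s))\<^sup>2 + (cmod (w $ t))\<^sup>2)"
proof -
  show mass: "(cmod (v $ s))\<^sup>2 + (cmod (v $ t))\<^sup>2 = (cmod c)\<^sup>2 * ((cmod (w $ s))\<^sup>2 + (cmod (w $ t))\<^sup>2)"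
    using assms(2,3) by (simp add: norm_mult power_mult_distrib distrib_left)
  have "(cmod (v $ s))\<^sup>2 = (cmod c)\<^sup>2 * (cmod (w $ s))\<^sup>2"
    using assms(2) by (simp add: norm_mult power_mult_distrib)
  then show "branch_prob v s t = branch_prob w s t"
    using assms(1) unfolding branch_prob_def mass by simp
qed

lemma normalise_component: "normalise w $ j = complex_of_real (1 / norm w) * w $ j"
  by (simp add: normalise_def scaleR_conv_of_real[where 'a=complex])

text \<open>The probability mass function of move_pmf in closed form, which makes its measurability
  in the ontic state evident.\<close>
definition move_weight :: "'n set \<Rightarrow> 'n set \<Rightarrow> 'n set \<Rightarrow> 'n set set \<Rightarrow> ('n \<Rightarrow> real) \<Rightarrow> ('n set \<Rightarrow> real)
    \<Rightarrow> ('n::finite) ontic \<Rightarrow> 'n \<Rightarrow> real" where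
  "move_weight F D S B \<omega> R x q' =
    (let q = fst x; k = partner B q; u' = gate_u F D S B \<omega> R x
     in if q \<in> \<Union>B \<and> (cmod (u' $ q))\<^sup>2 + (cmod (u' $ k))\<^sup>2 \<noteq> 0
        then (if q' = q then branch_prob u' q k else 0) + (if q' = k then branch_prob u' k q else 0)
        else (if q' = q then 1 else 0))"

lemma pmf_move_pmf: "pmf (move_pmf F D S B \<omega> R x) q' = move_weight F D S B \<omega> R x q'"
proof -
  obtain q u tau where x: "x = (q, u, tau)" by (cases x) auto
  define a where "a = (cmod (gate_u F D S B \<omega> R x $ q))\<^sup>2"
  define b where "b = (cmod (gate_u F D S B \<omega> R x $ partner B q))\<^sup>2"
  show ?thesis
  proof (cases "q \<in> \<Union>B \<and> a + b \<noteq> 0")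
    case True
    moreover have ab: "0 \<le> a" "0 \<le> b" by (simp_all add: a_def b_def)
    ultimately have "a + b > 0" by linarith
    then have sum: "a / (a + b) + b / (a + b) = 1"
      by (simp add: add_divide_distrib[symmetric])
    then have w: "0 \<le> a / (a + b)" "a / (a + b) \<le> 1" "1 - a / (a + b) = b / (a + b)"
      using ab \<open>a + b > 0\<close> by simp_all
    have "move_pmf F D S B \<omega> R x = map_pmf (\<lambda>c. if c then q else partner B q) (bernoulli_pmf (a / (a + b)))"
      using True by (auto simp: move_pmf_def Let_def x a_def b_def)
    moreover have "move_weight F D S B \<omega> R x q' =
        (if q' = q then a / (a + b) else 0) + (if q' = partner B q then b / (a + b) else 0)"
      using True by (auto simp: move_weight_def branch_prob_def Let_def x a_def b_def add.commute)
    ultimately show ?thesis using sum by (simp add: pmf_map_bernoulli_if[OF w(1,2)] w(3))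
  next
    case False
    then show ?thesis
      by (auto simp: move_pmf_def move_weight_def x a_def b_def indicator_def)
  qed
qed

lemma move_weight_measurable[measurable]:
  "(\<lambda>x. move_weight F D S B \<omega> R x q') \<in> borel_measurable lam_M"
proof -
  have "(\<lambda>x. move_weight F D S B \<omega> R (q, snd x) q') \<in> borel_measurable lam_M" for q
  proof -
    have [measurable]: "(\<lambda>x. gate_u F D S B \<omega> R (q, snd x))
        \<in> borel_measurable (count_space UNIV \<Otimes>\<^sub>M (borel \<Otimes>\<^sub>M borel))"
      by measurable
    show ?thesis
      unfolding move_weight_def Let_def branch_prob_def fst_conv lam_M_def by measurable
  qed
  then have "(\<lambda>x. move_weight F D S B \<omega> R (fst x, snd x) q') \<in> borel_measurable lam_M"
    by (rule measurable_compose_countable[where f="\<lambda>q x. move_weight F D S B \<omega> R (q, snd x) q'"])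
      (simp add: lam_M_def)
  then show ?thesis by simp
qed

lemma sets_gate_kernel[simp, measurable_cong]: "sets (gate_kernel F D S B \<omega> R x) = sets lam_M"
  by (simp add: gate_kernel_def)

lemma prob_space_gate_kernel: "prob_space (gate_kernel F D S B \<omega> R x)"
  unfolding gate_kernel_def by (rule prob_space.prob_space_distr) (simp_all add: prob_space_measure_pmf)

lemma measure_gate_kernel:
  assumes "A \<in> sets lam_M"
  shows "measure (gate_kernel F D S B \<omega> R x) A =
    (\<Sum>q'\<in>UNIV. move_weight F D S B \<omega> R x q' * indicator A (q', gate_u F D S B \<omega> R x, gate_tau F D S B x))"
proof -
  let ?f = "\<lambda>q'. (q', gate_u F D S B \<omega> R x, gate_tau F D S B x)"
  have "measure (gate_kernel F D S B \<omega> R x) A = measure (measure_pmf (move_pmf F D S B \<omega> R x)) (?f -` A)"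
    unfolding gate_kernel_def using assms by (simp add: measure_distr)
  also have "\<dots> = (\<Sum>q'\<in>?f -` A. move_weight F D S B \<omega> R x q')"
    by (simp add: measure_measure_pmf_finite pmf_move_pmf)
  also have "\<dots> = (\<Sum>q'\<in>UNIV. move_weight F D S B \<omega> R x q' * indicator A (?f q'))"
    by (simp add: indicator_def sum.If_cases Int_def vimage_def)
  finally show ?thesis .
qed

lemma gate_kernel_measurable:
  fixes F :: "'n::finite set"
  shows "gate_kernel F D S B \<omega> R \<in> measurable lam_M (subprob_algebra lam_M)"
proof (rule measurable_subprob_algebra)
  fix A :: "'n ontic set" assume A[measurable]: "A \<in> sets lam_M"
  have "(\<lambda>x. ennreal (\<Sum>q'\<in>UNIV. move_weight F D S B \<omega> R x q' *
      indicator A (q', gate_u F D S B \<omega> R x, gate_tau F D S B x))) \<in> borel_measurable lam_M"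
    by measurable
  moreover have "emeasure (gate_kernel F D S B \<omega> R x) A =
      ennreal (\<Sum>q'\<in>UNIV. move_weight F D S B \<omega> R x q' *
        indicator A (q', gate_u F D S B \<omega> R x, gate_tau F D S B x))" for x
    by (simp only: finite_measure.emeasure_eq_measure[OF prob_space.finite_measure[OF prob_space_gate_kernel]]
        measure_gate_kernel[OF A])
  ultimately show "(\<lambda>x. emeasure (gate_kernel F D S B \<omega> R x) A) \<in> borel_measurable lam_M"
    by simp
qed (simp_all add: prob_space_gate_kernel prob_space_imp_subprob_space)

lemma AE_gate_kernel:
  assumes "Measurable.pred lam_M P"
    and "\<And>q'. q' \<in> set_pmf (move_pmf F D S B \<omega> R x) \<Longrightarrow> P (q', gate_u F D S B \<omega> R x, gate_tau F D S B x)"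
  shows "AE y in gate_kernel F D S B \<omega> R x. P y"
  unfolding gate_kernel_def using assms
  by (subst AE_distr_iff) (simp_all add: AE_measure_pmf_iff pred_def)

lemma set_pmf_move_pmf_off_splitters:
  "q \<notin> \<Union>B \<Longrightarrow> set_pmf (move_pmf F D S B \<omega> R (q, u, tau)) = {q}"
  unfolding move_pmf_def by simp

lemma apply_config_in_zdist:
  assumes p: "p \<in> zdist z i"
    and K: "\<And>x. x \<in> Lam i z \<Longrightarrow> AE y in gate_kernel F D S B \<omega> R x. y \<in> Lam j v"
  shows "apply_config F D S B \<omega> R p \<in> zdist v j"
proof -
  have ps: "prob_space p" and sp: "sets p = sets lam_M" and ae: "AE x in p. x \<in> Lam i z"
    using p unfolding zdist_def by auto
  have Kp: "gate_kernel F D S B \<omega> R \<in> measurable p (subprob_algebra lam_M)"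
    using gate_kernel_measurable measurable_cong_sets[OF sp refl] by blast
  have "prob_space (apply_config F D S B \<omega> R p)"
    unfolding apply_config_def
    by (rule prob_space.prob_space_bind[OF ps _ Kp]) (simp add: prob_space_gate_kernel)
  moreover have "sets (apply_config F D S B \<omega> R p) = sets lam_M"
    unfolding apply_config_def using prob_space.not_empty[OF ps] by (simp add: sets_bind)
  moreover have "AE y in apply_config F D S B \<omega> R p. y \<in> Lam j v"
    unfolding apply_config_def
    by (subst AE_bind[OF Kp]) (use ae K in \<open>auto elim!: eventually_mono\<close>)
  ultimately show ?thesis unfolding zdist_def by auto
qed

lemma move_weight_on_Lam:
  fixes z :: "complex^'n::finite" and D S :: "'n set" and B :: "'n set set"
    and \<omega> :: "'n \<Rightarrow> real" and R :: "'n set \<Rightarrow> real"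
  defines "z' \<equiv> normalise (config_matrix D S B \<omega> R *v z)"
  assumes cfg: "parallel_config F D S B" and x: "(i, u, tau) \<in> Lam i z" and i: "i \<notin> D"
    and st: "{s, t} \<in> B" "i \<in> {s, t}" and nz: "(cmod (z' $ s))\<^sup>2 + (cmod (z' $ t))\<^sup>2 \<noteq> 0"
  shows "move_weight F D S B \<omega> R (i, u, tau) q' =
    (if q' = s then branch_prob z' s t else 0) + (if q' = t then branch_prob z' t s else 0)"
proof -
  let ?u = "gate_u F D S B \<omega> R (i, u, tau)" and ?w = "config_matrix D S B \<omega> R *v z"
  define k where "k = partner B i"
  have iB: "i \<in> \<Union>B" using st by blast
  have st_ik: "{s, t} = {i, k}" "k \<noteq> i"
    using partner_pair[OF cfg st] unfolding k_def by auto
  obtain \<alpha> where \<alpha>: "\<alpha> \<noteq> 0" "Delta_mat (tau_max tau) tau *v u = \<alpha> *s z"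
    and m: "0 < tau_max tau" "tau $ i = tau_max tau" and tau: "\<And>l. 0 \<le> tau $ l \<and> tau $ l \<le> 1"
    using x unfolding Lam_def by blast
  have tau_le: "0 \<le> tau $ l \<and> tau $ l \<le> tau_max tau" for l
    using tau tau_max_ge by blast
  have "Delta_mat (tau_max tau / 2) (gate_tau F D S B (i, u, tau)) *v ?u = \<alpha> *s ?w"
    by (rule gate_Delta_mat(2)[OF cfg i m(1) \<alpha>(1) tau_le \<alpha>(2)])
  moreover have "gate_tau F D S B (i, u, tau) $ j = tau_max tau / 2" if "j \<in> {i, k}" for j
    using gate_tau_at_particle[OF cfg i m(2) conjunct2[OF tau_le]] iB that unfolding k_def by blast
  ultimately have u_w: "?u $ j = \<alpha> * ?w $ j" if "j \<in> {i, k}" for j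
    using that unfolding Delta_mat_eq_scaled_iff by (metis (full_types))
  have "?w \<noteq> 0" using nz unfolding z'_def normalise_def by auto
  then have \<beta>: "\<alpha> * complex_of_real (norm ?w) \<noteq> 0" using \<alpha>(1) by simp
  have u_z': "?u $ j = (\<alpha> * complex_of_real (norm ?w)) * z' $ j" if "j \<in> {i, k}" for j
    using u_w[OF that] \<open>?w \<noteq> 0\<close> unfolding z'_def normalise_component by simp
  note scaled = branch_prob_scaled[OF \<beta> u_z' u_z']
  have "(cmod (?u $ i))\<^sup>2 + (cmod (?u $ k))\<^sup>2 \<noteq> 0"
    using scaled(2)[of i k] nz st_ik \<beta> by (auto simp: doubleton_eq_iff add.commute)
  then have "move_weight F D S B \<omega> R (i, u, tau) q' =
    (if q' = i then branch_prob z' i k else 0) + (if q' = k then branch_prob z' k i else 0)"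
    using iB st_ik(2) scaled(1)[of i k] scaled(1)[of k i] by (simp add: move_weight_def k_def)
  then show ?thesis
    using st_ik by (auto simp: doubleton_eq_iff)
qed

lemma (in prob_space) measure_bind_two_point:
  assumes K: "K \<in> measurable M (subprob_algebra N)"
    and f[measurable]: "f \<in> measurable M N" and g[measurable]: "g \<in> measurable M N"
    and A[measurable]: "A \<in> sets N"
    and ae: "AE x in M. measure (K x) A = c * indicator A (f x) + d * indicator A (g x)"
  shows "measure (M \<bind> K) A = c * measure (distr M N f) A + d * measure (distr M N g) A"
proof -
  have ind: "integrable M (\<lambda>x. indicator A (h x) :: real)"
    "(\<integral>x. indicator A (h x) \<partial>M) = measure (distr M N h) A" if [measurable]: "h \<in> measurable M N" for h
  proof -
    show "integrable M (\<lambda>x. indicator A (h x) :: real)"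
      by (rule integrable_const_bound[where B=1]) simp_all
    have "(indicator A :: _ \<Rightarrow> real) \<in> borel_measurable N" by simp
    from integral_distr[OF that this] show "(\<integral>x. indicator A (h x) \<partial>M) = measure (distr M N h) A"
      by simp
  qed
  have "measure (M \<bind> K) A = (\<integral>x. measure (K x) A \<partial>M)"
    by (rule measure_bind[OF K A])
  also have "\<dots> = (\<integral>x. c * indicator A (f x) + d * indicator A (g x) \<partial>M)"
  proof (rule integral_cong_AE[OF _ _ ae])
    show "(\<lambda>x. measure (K x) A) \<in> borel_measurable M"
      by (rule measure_measurable_subprob_algebra2[OF _ K]) measurable
  qed measurable
  also have "\<dots> = c * measure (distr M N f) A + d * measure (distr M N g) A"
    using ind[OF f] ind[OF g] by simp
  finally show ?thesis .
qed

lemma measure_gate_kernel_on_Lam: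
  fixes z :: "complex^'n::finite" and D S :: "'n set" and B :: "'n set set"
    and \<omega> :: "'n \<Rightarrow> real" and R :: "'n set \<Rightarrow> real"
  defines "z' \<equiv> normalise (config_matrix D S B \<omega> R *v z)"
  assumes cfg: "parallel_config F D S B" and x: "x \<in> Lam i z" and i: "i \<notin> D"
    and st: "{s, t} \<in> B" "i \<in> {s, t}" and nz: "(cmod (z' $ s))\<^sup>2 + (cmod (z' $ t))\<^sup>2 \<noteq> 0"
    and A: "A \<in> sets lam_M"
  shows "measure (gate_kernel F D S B \<omega> R x) A =
    branch_prob z' s t * indicator A (s, gate_u F D S B \<omega> R x, gate_tau F D S B x) +
    branch_prob z' t s * indicator A (t, gate_u F D S B \<omega> R x, gate_tau F D S B x)"
proof -
  obtain u tau where x_eq: "x = (i, u, tau)" and xL: "(i, u, tau) \<in> Lam i z"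
    using x by (rule LamE)
  have "s \<noteq> t" using partner_pair[OF cfg st] by (auto simp: doubleton_eq_iff)
  then show ?thesis
    using move_weight_on_Lam[OF cfg xL i st nz[unfolded z'_def]]
    by (simp add: measure_gate_kernel[OF A] x_eq z'_def if_distrib[of "\<lambda>c. c * _"] distrib_right
        sum.distrib sum.delta cong: if_cong)
qed

lemma apply_config_mixture:
  fixes z :: "complex^'n::finite" and D S :: "'n set" and B :: "'n set set"
    and \<omega> :: "'n \<Rightarrow> real" and R :: "'n set \<Rightarrow> real"
  defines "z' \<equiv> normalise (config_matrix D S B \<omega> R *v z)"
  assumes cfg: "parallel_config F D S B" and p: "p \<in> zdist z i" and i: "i \<notin> D"
    and st: "{s, t} \<in> B" "i \<in> {s, t}" and nz: "(cmod (z' $ s))\<^sup>2 + (cmod (z' $ t))\<^sup>2 \<noteq> 0"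
  shows "\<exists>ps pt. ps \<in> zdist z' s \<and> pt \<in> zdist z' t \<and>
    (\<forall>A\<in>sets lam_M. measure (apply_config F D S B \<omega> R p) A =
       branch_prob z' s t * measure ps A + branch_prob z' t s * measure pt A)"
proof -
  define f where "f q' x = (q', gate_u F D S B \<omega> R x, gate_tau F D S B x)" for q' :: 'n and x
  have ps: "prob_space p" and sp: "sets p = sets lam_M" and ae: "AE x in p. x \<in> Lam i z"
    using p unfolding zdist_def by auto
  have f_meas[measurable]: "f q' \<in> measurable p lam_M" for q'
    unfolding f_def using measurable_cong_sets[OF sp refl] gate_state_measurable by blast
  have K_meas: "gate_kernel F D S B \<omega> R \<in> measurable p (subprob_algebra lam_M)"
    using gate_kernel_measurable measurable_cong_sets[OF sp refl] by blast
  have "distr p lam_M (f q') \<in> zdist z' q'" if "q' \<in> {s, t}" for q'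
  proof -
    have q': "q' = i \<or> i \<in> \<Union>B \<and> q' = partner B i"
      using partner_pair[OF cfg st] that st by auto
    have "AE x in p. f q' x \<in> Lam q' z'"
      using ae by eventually_elim
        (use gate_state_in_Lam_branch[OF cfg _ i q'] in \<open>simp add: f_def z'_def\<close>)
    then have "AE y in distr p lam_M (f q'). y \<in> Lam q' z'"
      by (subst AE_distr_iff) simp_all
    then show ?thesis
      unfolding zdist_def using prob_space.prob_space_distr[OF ps f_meas] by simp
  qed
  moreover have "measure (apply_config F D S B \<omega> R p) A =
      branch_prob z' s t * measure (distr p lam_M (f s)) A + branch_prob z' t s * measure (distr p lam_M (f t)) A"
    if A: "A \<in> sets lam_M" for A
    unfolding apply_config_def
    by (rule prob_space.measure_bind_two_point[OF ps K_meas f_meas f_meas A])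
      (use ae in \<open>eventually_elim, simp add: f_def z'_def measure_gate_kernel_on_Lam[OF cfg _ i st nz[unfolded z'_def] A]\<close>)
  ultimately show ?thesis by blast
qed

lemma apply_config_off_splitters:
  assumes p: "p \<in> zdist z i" and i: "i \<notin> \<Union>B"
    and post: "\<And>x. x \<in> Lam i z \<Longrightarrow> (i, gate_u F D S B \<omega> R x, gate_tau F D S B x) \<in> Lam i v"
  shows "apply_config F D S B \<omega> R p \<in> zdist v i"
proof (rule apply_config_in_zdist[OF p])
  fix x assume x: "x \<in> Lam i z"
  then obtain u tau where "x = (i, u, tau)" by (rule LamE)
  then show "AE y in gate_kernel F D S B \<omega> R x. y \<in> Lam i v"
    using post[OF x] set_pmf_move_pmf_off_splitters[OF i] by (intro AE_gate_kernel) simp_all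
qed

theorem lemma1:
  fixes F D S :: "'n::finite set" and B :: "'n set set"
    and \<omega> :: "'n \<Rightarrow> real" and R :: "'n set \<Rightarrow> real"
    and z :: "complex^'n" and i :: 'n and p :: "'n ontic measure"
  assumes cfg: "parallel_config F D S B"
    and R: "\<forall>b\<in>B. 0 \<le> R b \<and> R b \<le> 1"
    and p: "p \<in> zdist z i"
  shows "(i \<in> D \<longrightarrow>
            (AE x in p. clicks D x = {i}) \<and>
            apply_config F D S B \<omega> R p \<in> zdist (axis i 1) i)
       \<and> (i \<notin> D \<longrightarrow>
            (AE x in p. clicks D x = {}) \<and>
            (let z' = normalise (mprod (\<lambda>j. mat 1 - P_mat j) D ** mprod (\<lambda>k. S_mat (\<omega> k) k) S
                                  ** mprod (\<lambda>b. B_mat (R b) b) B *v z);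
                 p' = apply_config F D S B \<omega> R p
             in (i \<notin> \<Union>B \<longrightarrow> p' \<in> zdist z' i) \<and>
                (\<forall>s t. {s, t} \<in> B \<longrightarrow> i \<in> {s, t} \<longrightarrow>
                   (cmod (z' $ s))\<^sup>2 + (cmod (z' $ t))\<^sup>2 \<noteq> 0 \<longrightarrow>
                   (\<exists>ps pt. ps \<in> zdist z' s \<and> pt \<in> zdist z' t \<and>
                      (\<forall>A\<in>sets lam_M. measure p' A =
                          (cmod (z' $ s))\<^sup>2 / ((cmod (z' $ s))\<^sup>2 + (cmod (z' $ t))\<^sup>2) * measure ps A
                        + (cmod (z' $ t))\<^sup>2 / ((cmod (z' $ s))\<^sup>2 + (cmod (z' $ t))\<^sup>2) * measure pt A)))))"
proof -
  have ae: "AE x in p. x \<in> Lam i z" using p unfolding zdist_def by blast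
  then have clicks: "AE x in p. clicks D x = (if i \<in> D then {i} else {})"
    by eventually_elim (auto simp: clicks_def Lam_def)
  have detector: "apply_config F D S B \<omega> R p \<in> zdist (axis i 1) i" if i: "i \<in> D"
  proof (rule apply_config_off_splitters[OF p])
    show "i \<notin> \<Union>B" using i parallel_configD(2)[OF cfg] by blast
    fix x assume "x \<in> Lam i z"
    then obtain u tau where "x = (i, u, tau)" "(i, u, tau) \<in> Lam i z" by (rule LamE)
    then show "(i, gate_u F D S B \<omega> R x, gate_tau F D S B x) \<in> Lam i (axis i 1)"
      using gate_state_in_Lam_detector[OF _ i] by simp
  qed
  have free: "apply_config F D S B \<omega> R p \<in> zdist (normalise (config_matrix D S B \<omega> R *v z)) i"
    if "i \<notin> D" "i \<notin> \<Union>B"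
    using gate_state_in_Lam_branch[OF cfg _ that(1)] that(2)
    by (intro apply_config_off_splitters[OF p]) simp_all
  have branch_prob_swap: "branch_prob v t s = (cmod (v $ t))\<^sup>2 / ((cmod (v $ s))\<^sup>2 + (cmod (v $ t))\<^sup>2)"
    for v :: "complex^'n" and s t
    by (simp add: branch_prob_def add.commute)
  show ?thesis
    unfolding config_matrix_def[symmetric] Let_def
    using clicks detector free apply_config_mixture[OF cfg p]
    by (auto simp: branch_prob_def[symmetric] branch_prob_swap[symmetric])
qed

end
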